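(* Let $G$ be a graph, let $V(G)=V_1\cup V_2$ be a partition of its vertex set, and let $X\subseteq V_1$ be the vertex boundary of $V_2$ in $G$. Let $H$ be a connected graph with $|H|\ge|V_2|$ and let $G':=(G[V_1],X)\vee H$. Let $M\in S(G)$ and let $\sigma'$ be a multiset of $|H|-|V_2|$ real numbers such that the multiset $\sigma(M[V_2])\cup\sigma'$ is generically realisable for $H$. Then there exists $N\in S(G')$ with spectrum $\sigma(N)=\sigma(M)\cup\sigma'$ (union of multisets).
   Context: $S(G)$ is the set of real symmetric matrices indexed by $V(G)$ whose $(i,j)$ off-diagonal entry is nonzero iff $\{i,j\}\in E(G)$ (diagonal unrestricted). $G[W]$ is the subgraph induced on $W$ and $M[W]$ the principal submatrix of $M$ with rows and columns in $W$; $\sigma(\cdot)$ is the spectrum as a multiset. The vertex boundary of $W\subseteq V(G)$ is the set of vertices in $V(G)\setminus W$ adjacent in $G$ to some vertex of $W$. For disjoint graphs $G_1,G_2$ and $U_1\subseteq V(G_1)$, the partial join $(G_1,U_1)\vee G_2$ is $G_1\cup G_2$ together with all edges joining each vertex of $U_1$ to each vertex of $G_2$. For a connected graph $H$ of order $n$, a multiset $\sigma$ of $n$ reals is generically realisable for $H$ if for every finite set $\mathcal Y\subseteq\mathbb{R}^n\setminus\{\mathbf 0\}$ there is a real orthogonal matrix $U$ with $UDU^\top\in S(H)$, $D$ a fixed diagonal matrix with spectrum $\sigma$, such that $U\mathbf y$ has no zero entry for all $\mathbf y\in\mathcal Y$. *)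

theory Defs
  imports "HOL-Computational_Algebra.Polynomial" "HOL-Combinatorics.Permutations"
begin

type_synonym 'a graph = "'a set \<times> ('a \<Rightarrow> 'a \<Rightarrow> bool)"

definition verts :: "'a graph \<Rightarrow> 'a set" where "verts G = fst G"
definition adj :: "'a graph \<Rightarrow> 'a \<Rightarrow> 'a \<Rightarrow> bool" where "adj G = snd G"

definition graph :: "'a graph \<Rightarrow> bool" where
  "graph G \<longleftrightarrow> finite (verts G) \<and>
     (\<forall>x y. adj G x y \<longrightarrow> x \<in> verts G \<and> y \<in> verts G \<and> x \<noteq> y \<and> adj G y x)"

definition connected_graph :: "'a graph \<Rightarrow> bool" where
  "connected_graph G \<longleftrightarrow> graph G \<and> verts G \<noteq> {} \<and>
     (\<forall>x\<in>verts G. \<forall>y\<in>verts G. (adj G)\<^sup>*\<^sup>* x y)"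

definition induced :: "'a graph \<Rightarrow> 'a set \<Rightarrow> 'a graph" where
  "induced G W = (verts G \<inter> W, \<lambda>x y. x \<in> W \<and> y \<in> W \<and> adj G x y)"

definition vertex_boundary :: "'a graph \<Rightarrow> 'a set \<Rightarrow> 'a set" where
  "vertex_boundary G W = {v \<in> verts G - W. \<exists>w\<in>W. adj G v w}"

definition partial_join :: "'a graph \<Rightarrow> 'a set \<Rightarrow> 'b graph \<Rightarrow> ('a + 'b) graph" where
  "partial_join G1 U1 G2 =
    (Inl ` verts G1 \<union> Inr ` verts G2,
     \<lambda>x y. (case (x, y) of
              (Inl a, Inl b) \<Rightarrow> adj G1 a b
            | (Inr a, Inr b) \<Rightarrow> adj G2 a b
            | (Inl a, Inr b) \<Rightarrow> a \<in> U1 \<and> a \<in> verts G1 \<and> b \<in> verts G2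
            | (Inr a, Inl b) \<Rightarrow> b \<in> U1 \<and> b \<in> verts G1 \<and> a \<in> verts G2))"

text \<open>Matrices indexed by a finite set I are functions I \<Rightarrow> I \<Rightarrow> real,
  required to vanish outside I \<times> I.\<close>
type_synonym 'a rmat = "'a \<Rightarrow> 'a \<Rightarrow> real"

definition S_set :: "'a graph \<Rightarrow> 'a rmat set" ("S'(_')") where
  "S_set G = {M. (\<forall>i j. (i \<notin> verts G \<or> j \<notin> verts G) \<longrightarrow> M i j = 0) \<and>
      (\<forall>i\<in>verts G. \<forall>j\<in>verts G. M i j = M j i) \<and>
      (\<forall>i\<in>verts G. \<forall>j\<in>verts G. i \<noteq> j \<longrightarrow> (M i j \<noteq> 0 \<longleftrightarrow> adj G i j))}"

definition submatrix :: "'a rmat \<Rightarrow> 'a set \<Rightarrow> 'a rmat" where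
  "submatrix M W = (\<lambda>i j. if i \<in> W \<and> j \<in> W then M i j else 0)"

definition charpoly :: "'a set \<Rightarrow> 'a rmat \<Rightarrow> real poly" where
  "charpoly I M = (\<Sum>p | p permutes I. of_int (sign p) *
      (\<Prod>i\<in>I. (if p i = i then [:- M i i, 1:] else [:- M i (p i):])))"

text \<open>Spectrum as a multiset: the real roots of the characteristic polynomial with
  algebraic multiplicity (for real symmetric matrices these are all eigenvalues).\<close>
definition spectrum :: "'a set \<Rightarrow> 'a rmat \<Rightarrow> real multiset" where
  "spectrum I M = proots (charpoly I M)"

definition orthogonal_on :: "'a set \<Rightarrow> 'a rmat \<Rightarrow> bool" where
  "orthogonal_on I U \<longleftrightarrow> (\<forall>i j. (i \<notin> I \<or> j \<notin> I) \<longrightarrow> U i j = 0) \<and>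
     (\<forall>i\<in>I. \<forall>j\<in>I. (\<Sum>k\<in>I. U i k * U j k) = (if i = j then 1 else 0))"

definition conj_diag :: "'a set \<Rightarrow> 'a rmat \<Rightarrow> ('a \<Rightarrow> real) \<Rightarrow> 'a rmat" where
  "conj_diag I U d = (\<lambda>i j. if i \<in> I \<and> j \<in> I then (\<Sum>k\<in>I. U i k * d k * U j k) else 0)"

definition mat_vec :: "'a set \<Rightarrow> 'a rmat \<Rightarrow> ('a \<Rightarrow> real) \<Rightarrow> ('a \<Rightarrow> real)" where
  "mat_vec I U y = (\<lambda>i. \<Sum>k\<in>I. U i k * y k)"

definition generically_realisable :: "real multiset \<Rightarrow> 'a graph \<Rightarrow> bool" where
  "generically_realisable \<sigma> H \<longleftrightarrow> connected_graph H \<and>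
     (\<exists>d. image_mset d (mset_set (verts H)) = \<sigma> \<and>
       (\<forall>Y. finite Y \<and>
            (\<forall>y\<in>Y. (\<forall>i. i \<notin> verts H \<longrightarrow> y i = 0) \<and> (\<exists>i\<in>verts H. y i \<noteq> 0)) \<longrightarrow>
          (\<exists>U. orthogonal_on (verts H) U \<and> conj_diag (verts H) U d \<in> S(H) \<and>
               (\<forall>y\<in>Y. \<forall>i\<in>verts H. mat_vec (verts H) U y i \<noteq> 0))))"

end

(*
  Embed V2 into the vertices of H by an injection and put the extra eigenvalues sigma' on the
  diagonal at the remaining vertices of H. On V1 + V(H) this gives a symmetric block matrix
    [ M[V1]  B ]
    [ B^T    C ]
  which is M relabelled plus a diagonal block, so its spectrum is sigma(M) + sigma', while
  sigma(C) = sigma(M[V2]) + sigma'. Write C = Q D Q^T. Generic realisability of sigma(C) for H gives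
  an orthogonal U with U D U^T in S(H) such that U Q^T b has no zero entry for every nonzero row b
  of B. Conjugating by the block diagonal matrix diag(1, U Q^T) keeps the spectrum and yields
    [ M[V1]      B Q U^T ]
    [ U Q^T B^T  U D U^T ]
  A row of B is nonzero exactly when its vertex lies in the boundary X of V2, so this matrix has
  precisely the nonzero pattern of the partial join (G[V1], X) v H.
*)

theory Submission
  imports Defs "Jordan_Normal_Form.Char_Poly" "HOL-Computational_Algebra.Fundamental_Theorem_Algebra"
begin

section \<open>Matrices indexed by finite sets\<close>

definition mat_prod :: "'i set \<Rightarrow> 'i rmat \<Rightarrow> 'i rmat \<Rightarrow> 'i rmat" where
  "mat_prod I A B = (\<lambda>i j. if i \<in> I \<and> j \<in> I then (\<Sum>k\<in>I. A i k * B k j) else 0)"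

definition mat_id :: "'i set \<Rightarrow> 'i rmat" where
  "mat_id I = (\<lambda>i j. if i \<in> I \<and> i = j then 1 else 0)"

definition mat_transp :: "'i rmat \<Rightarrow> 'i rmat" where
  "mat_transp A = (\<lambda>i j. A j i)"

definition supported_on :: "'i set \<Rightarrow> 'i rmat \<Rightarrow> bool" where
  "supported_on I A \<longleftrightarrow> (\<forall>i j. i \<notin> I \<or> j \<notin> I \<longrightarrow> A i j = 0)"

definition mat_diag :: "'i set \<Rightarrow> ('i \<Rightarrow> real) \<Rightarrow> 'i rmat" where
  "mat_diag I d = (\<lambda>i j. if i \<in> I \<and> i = j then d i else 0)"

lemma supported_on_mat_prod [simp]: "supported_on I (mat_prod I A B)"
  by (simp add: supported_on_def mat_prod_def)

lemma supported_on_mat_id [simp]: "supported_on I (mat_id I)"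
  by (simp add: supported_on_def mat_id_def)

lemma supported_on_mat_transp [simp]: "supported_on I (mat_transp A) = supported_on I A"
  by (auto simp: supported_on_def mat_transp_def)

lemma mat_transp_mat_transp [simp]: "mat_transp (mat_transp A) = A"
  by (simp add: mat_transp_def)

lemma mat_transp_eqD: "mat_transp A = A \<Longrightarrow> A i j = A j i"
  by (metis mat_transp_def)

lemma mat_transp_mat_prod: "mat_transp (mat_prod I A B) = mat_prod I (mat_transp B) (mat_transp A)"
  by (auto simp: mat_transp_def mat_prod_def fun_eq_iff mult.commute)

lemma mat_prod_assoc:
  assumes "finite I"
  shows "mat_prod I (mat_prod I A B) C = mat_prod I A (mat_prod I B C)"
proof -
  have "(\<Sum>k\<in>I. (\<Sum>l\<in>I. A i l * B l k) * C k j) = (\<Sum>l\<in>I. A i l * (\<Sum>k\<in>I. B l k * C k j))"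
    for i j
  proof -
    have "(\<Sum>k\<in>I. (\<Sum>l\<in>I. A i l * B l k) * C k j) = (\<Sum>k\<in>I. \<Sum>l\<in>I. A i l * B l k * C k j)"
      by (simp add: sum_distrib_right)
    also have "\<dots> = (\<Sum>l\<in>I. \<Sum>k\<in>I. A i l * B l k * C k j)"
      by (rule sum.swap)
    also have "\<dots> = (\<Sum>l\<in>I. A i l * (\<Sum>k\<in>I. B l k * C k j))"
      by (simp add: sum_distrib_left mult.assoc)
    finally show ?thesis .
  qed
  then show ?thesis
    by (auto simp: mat_prod_def fun_eq_iff intro!: sum.cong)
qed

lemma mat_prod_mat_id_left:
  assumes "supported_on I A" "finite I"
  shows "mat_prod I (mat_id I) A = A"
  using assms by (auto simp: mat_prod_def mat_id_def fun_eq_iff supported_on_def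
      if_distrib[of "\<lambda>x. x * _"] cong: if_cong)

lemma mat_prod_mat_id_right:
  assumes "supported_on I A" "finite I"
  shows "mat_prod I A (mat_id I) = A"
  using assms by (auto simp: mat_prod_def mat_id_def fun_eq_iff supported_on_def
      if_distrib[of "\<lambda>x. _ * x"] cong: if_cong)

lemma conj_diag_eq_mat_prod:
  assumes "finite I"
  shows "conj_diag I U d = mat_prod I (mat_prod I U (mat_diag I d)) (mat_transp U)"
proof -
  have "(\<Sum>l\<in>I. U i l * (if l \<in> I \<and> l = k then d l else 0)) = U i k * d k" if "k \<in> I" for i k
    using that assms by (simp add: if_distrib[of "\<lambda>x. _ * x"] cong: if_cong)
  then show ?thesis
    by (auto simp: conj_diag_def mat_prod_def mat_diag_def mat_transp_def fun_eq_iff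
        intro!: sum.cong)
qed

lemma orthogonal_on_iff:
  "orthogonal_on I U \<longleftrightarrow> supported_on I U \<and> mat_prod I U (mat_transp U) = mat_id I"
  by (auto simp: orthogonal_on_def supported_on_def mat_prod_def mat_transp_def mat_id_def
      fun_eq_iff)

lemma mat_vec_mat_prod:
  assumes "finite I" "i \<in> I"
  shows "mat_vec I (mat_prod I A B) y i = mat_vec I A (mat_vec I B y) i"
proof -
  have "(\<Sum>k\<in>I. (\<Sum>l\<in>I. A i l * B l k) * y k) = (\<Sum>k\<in>I. \<Sum>l\<in>I. A i l * B l k * y k)"
    by (simp add: sum_distrib_right)
  also have "\<dots> = (\<Sum>l\<in>I. \<Sum>k\<in>I. A i l * B l k * y k)"
    by (rule sum.swap)
  also have "\<dots> = (\<Sum>l\<in>I. A i l * (\<Sum>k\<in>I. B l k * y k))"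
    by (simp add: sum_distrib_left mult.assoc)
  finally have "(\<Sum>k\<in>I. (\<Sum>l\<in>I. A i l * B l k) * y k) = (\<Sum>l\<in>I. A i l * (\<Sum>k\<in>I. B l k * y k))" .
  then show ?thesis
    using assms by (simp add: mat_vec_def mat_prod_def cong: sum.cong)
qed

lemma mat_vec_mat_id:
  assumes "finite I" "i \<in> I"
  shows "mat_vec I (mat_id I) y i = y i"
  using assms by (simp add: mat_vec_def mat_id_def if_distrib[of "\<lambda>x. x * _"] cong: if_cong)

lemma mat_vec_support:
  assumes "supported_on I A" "i \<notin> I"
  shows "mat_vec I A y i = 0"
  using assms by (simp add: mat_vec_def supported_on_def)

lemma mat_vec_transp_orthogonal_nonzero:
  assumes "finite I" "orthogonal_on I Q" "i \<in> I" "y i \<noteq> 0"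
  shows "\<exists>k\<in>I. mat_vec I (mat_transp Q) y k \<noteq> 0"
proof (rule ccontr)
  assume "\<not> ?thesis"
  then have "mat_vec I Q (mat_vec I (mat_transp Q) y) i = 0"
    by (simp add: mat_vec_def)
  moreover have "mat_vec I Q (mat_vec I (mat_transp Q) y) i = y i"
    using assms mat_vec_mat_prod[OF assms(1,3), of Q "mat_transp Q" y]
    by (simp add: orthogonal_on_iff mat_vec_mat_id)
  ultimately show False using assms(4) by simp
qed

section \<open>Characteristic polynomials and spectra\<close>

definition to_jnf :: "nat \<Rightarrow> (nat \<Rightarrow> 'i) \<Rightarrow> 'i rmat \<Rightarrow> real mat" where
  "to_jnf n f A = mat n n (\<lambda>(i, j). A (f i) (f j))"

lemma to_jnf_carrier [simp]: "to_jnf n f A \<in> carrier_mat n n"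
  by (simp add: to_jnf_def)

lemma dim_to_jnf [simp]: "dim_row (to_jnf n f A) = n" "dim_col (to_jnf n f A) = n"
  by (simp_all add: to_jnf_def)

lemma to_jnf_index [simp]: "i < n \<Longrightarrow> j < n \<Longrightarrow> to_jnf n f A $$ (i, j) = A (f i) (f j)"
  by (simp add: to_jnf_def)

lemma char_poly_matrix_to_jnf_index:
  "i < n \<Longrightarrow> j < n \<Longrightarrow> char_poly_matrix (to_jnf n f A) $$ (i, j) =
     (if i = j then [:- A (f i) (f j), 1:] else [:- A (f i) (f j):])"
  by (simp add: char_poly_matrix_def to_jnf_def)

lemma dim_char_poly_matrix_to_jnf [simp]:
  "dim_row (char_poly_matrix (to_jnf n f A)) = n" "dim_col (char_poly_matrix (to_jnf n f A)) = n"
  by (simp_all add: char_poly_matrix_def)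

lemma finite_enumeration:
  assumes "finite I"
  obtains f where "bij_betw f {..<card I} I"
  using ex_bij_betw_nat_finite[OF assms] that by (auto simp: atLeast0LessThan)

lemma to_jnf_mat_prod:
  assumes f: "bij_betw f {..<n} I"
  shows "to_jnf n f (mat_prod I A B) = to_jnf n f A * to_jnf n f B"
proof (rule eq_matI)
  fix i j assume "i < dim_row (to_jnf n f A * to_jnf n f B)" "j < dim_col (to_jnf n f A * to_jnf n f B)"
  then have i: "i < n" and j: "j < n" by auto
  have "(to_jnf n f A * to_jnf n f B) $$ (i, j) = (\<Sum>k\<in>{..<n}. A (f i) (f k) * B (f k) (f j))"
    using i j by (simp add: scalar_prod_def atLeast0LessThan)
  also have "\<dots> = (\<Sum>k\<in>I. A (f i) k * B k (f j))"
    by (rule sum.reindex_bij_betw[OF f])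
  finally show "to_jnf n f (mat_prod I A B) $$ (i, j) = (to_jnf n f A * to_jnf n f B) $$ (i, j)"
    using i j f by (auto simp: mat_prod_def bij_betw_def)
qed auto

lemma to_jnf_mat_transp: "to_jnf n f (mat_transp A) = transpose_mat (to_jnf n f A)"
  by (rule eq_matI) (auto simp: mat_transp_def)

lemma to_jnf_mat_id:
  assumes f: "bij_betw f {..<n} I"
  shows "to_jnf n f (mat_id I) = 1\<^sub>m n"
proof (rule eq_matI)
  fix i j assume "i < dim_row (1\<^sub>m n)" "j < dim_col (1\<^sub>m n)"
  then have i: "i < n" and j: "j < n" by auto
  then have "(f i = f j) = (i = j)" using f by (auto simp: bij_betw_def inj_on_def)
  then show "to_jnf n f (mat_id I) $$ (i, j) = 1\<^sub>m n $$ (i, j)"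
    using i j f by (auto simp: mat_id_def bij_betw_def)
qed auto

lemma to_jnf_inj:
  assumes f: "bij_betw f {..<n} I" and "supported_on I A" "supported_on I B"
    and "to_jnf n f A = to_jnf n f B"
  shows "A = B"
proof (intro ext)
  fix i j
  show "A i j = B i j"
  proof (cases "i \<in> I \<and> j \<in> I")
    case True
    then obtain k l where "k < n" "i = f k" "l < n" "j = f l"
      using f unfolding bij_betw_def by (metis imageE lessThan_iff)
    then show ?thesis using arg_cong[OF assms(4), of "\<lambda>C. C $$ (k, l)"] by simp
  next
    case False
    then show ?thesis using assms(2,3) by (auto simp: supported_on_def)
  qed
qed

lemma charpoly_cong:
  assumes "\<And>i j. i \<in> I \<Longrightarrow> j \<in> I \<Longrightarrow> A i j = B i j"
  shows "charpoly I A = charpoly I B"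
  unfolding charpoly_def
  by (intro sum.cong refl arg_cong[where f="\<lambda>x. _ * x"] prod.cong)
     (auto simp: assms permutes_in_image)

lemma charpoly_reindex:
  assumes g: "bij_betw g J I" and "finite J"
  shows "charpoly J (\<lambda>i j. A (g i) (g j)) = charpoly I A"
proof -
  define E where "E = (\<lambda>i j. if j = i then [:- A i i, 1:] else [:- A i j:])"
  have inj: "inj_on g J" using g by (simp add: bij_betw_def)
  define g' where "g' = inv_into J g"
  have g': "bij_betw g' I J" unfolding g'_def by (rule bij_betw_inv_into[OF g])
  have g'g: "\<And>x. x \<in> J \<Longrightarrow> g' (g x) = x" unfolding g'_def using inj by simp
  have gg': "\<And>x. x \<in> I \<Longrightarrow> g (g' x) = x" unfolding g'_def using g
    by (simp add: bij_betw_inv_into_right)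
  let ?mp = "map_permutation J g"
  have "charpoly I A = (\<Sum>q | q permutes I. of_int (sign q) * (\<Prod>i\<in>I. E i (q i)))"
    unfolding charpoly_def E_def by simp
  also have "\<dots> = (\<Sum>p | p permutes J. of_int (sign (?mp p)) * (\<Prod>i\<in>I. E i (?mp p i)))"
  proof (rule sum.reindex_bij_witness[of _ ?mp "map_permutation I g'"])
    fix q assume "q \<in> {q. q permutes I}"
    then show "?mp (map_permutation I g' q) = q" "map_permutation I g' q \<in> {p. p permutes J}"
      using map_permutation_compose_inv[OF g' _ gg'] map_permutation_permutes[OF g'] by auto
  next
    fix p assume "p \<in> {p. p permutes J}"
    then show "map_permutation I g' (?mp p) = p" "?mp p \<in> {q. q permutes I}"
      using map_permutation_compose_inv[OF g _ g'g] map_permutation_permutes[OF g] by auto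
  qed (simp add: map_permutation_compose_inv[OF g' _ gg'])
  also have "\<dots> = (\<Sum>p | p permutes J. of_int (sign p) * (\<Prod>k\<in>J. E (g k) (g (p k))))"
  proof (rule sum.cong[OF refl])
    fix p assume "p \<in> {p. p permutes J}"
    then have p: "p permutes J" by simp
    have "(\<Prod>i\<in>I. E i (?mp p i)) = (\<Prod>k\<in>J. E (g k) (?mp p (g k)))"
      by (rule prod.reindex_bij_betw[OF g, symmetric])
    also have "\<dots> = (\<Prod>k\<in>J. E (g k) (g (p k)))"
      by (rule prod.cong[OF refl]) (simp add: map_permutation_apply[OF inj])
    finally show "of_int (sign (?mp p)) * (\<Prod>i\<in>I. E i (?mp p i)) =
        of_int (sign p) * (\<Prod>k\<in>J. E (g k) (g (p k)))"
      using sign_map_permutation[OF inj p assms(2)] by simp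
  qed
  also have "\<dots> = charpoly J (\<lambda>i j. A (g i) (g j))"
    unfolding charpoly_def
  proof (rule sum.cong[OF refl])
    fix p assume "p \<in> {p. p permutes J}"
    then have "\<And>k. k \<in> J \<Longrightarrow> (g (p k) = g k) = (p k = k)"
      using inj by (auto simp: inj_on_def permutes_in_image)
    then show "of_int (sign p) * (\<Prod>k\<in>J. E (g k) (g (p k))) = of_int (sign p) *
        (\<Prod>i\<in>J. if p i = i then [:- A (g i) (g i), 1:] else [:- A (g i) (g (p i)):])"
      by (auto simp: E_def intro!: prod.cong)
  qed
  finally show ?thesis ..
qed

lemma charpoly_eq_char_poly:
  assumes f: "bij_betw f {..<n} I"
  shows "charpoly I A = char_poly (to_jnf n f A)"
proof -
  have "charpoly I A = charpoly {..<n} (\<lambda>i j. A (f i) (f j))"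
    by (rule charpoly_reindex[OF f, symmetric]) simp
  also have "\<dots> = char_poly (to_jnf n f A)"
    unfolding charpoly_def char_poly_def det_def
    by (auto simp: atLeast0LessThan char_poly_matrix_to_jnf_index permutes_in_image
        intro!: sum.cong arg_cong[where f="\<lambda>x. _ * x"] prod.cong)
  finally show ?thesis .
qed

lemma charpoly_nonzero:
  assumes "finite I"
  shows "charpoly I A \<noteq> 0"
proof -
  obtain f where f: "bij_betw f {..<card I} I" using finite_enumeration[OF assms] .
  have "coeff (char_poly (to_jnf (card I) f A)) (card I) = 1"
    using degree_monic_char_poly[OF to_jnf_carrier] by blast
  then show ?thesis unfolding charpoly_eq_char_poly[OF f] by auto
qed

lemma charpoly_mat_diag:
  assumes "finite I"
  shows "charpoly I (mat_diag I d) = (\<Prod>i\<in>I. [:- d i, 1:])"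
proof -
  define F where "F = (\<lambda>p. of_int (sign p) * (\<Prod>i\<in>I.
      (if p i = i then [:- mat_diag I d i i, 1:] else [:- mat_diag I d i (p i):])))"
  have "charpoly I (mat_diag I d) = sum F {p. p permutes I}"
    unfolding charpoly_def F_def ..
  also have "\<dots> = sum F {id}"
  proof (rule sum.mono_neutral_right)
    show "\<forall>p\<in>{p. p permutes I} - {id}. F p = 0"
    proof
      fix p assume "p \<in> {p. p permutes I} - {id}"
      then have p: "p permutes I" "p \<noteq> id" by auto
      then obtain i where i: "p i \<noteq> i" by (auto simp: fun_eq_iff)
      then have "i \<in> I" using p(1) by (meson permutes_not_in)
      then show "F p = 0"
        using i assms unfolding F_def by (intro mult_eq_0_iff[THEN iffD2] disjI2 prod_zero bexI)
          (auto simp: mat_diag_def)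
    qed
  qed (use assms in \<open>simp_all add: finite_permutations permutes_id\<close>)
  also have "\<dots> = (\<Prod>i\<in>I. [:- d i, 1:])"
    by (auto simp: F_def mat_diag_def intro!: prod.cong)
  finally show ?thesis .
qed

lemma proots_prod_linear:
  assumes "finite I"
  shows "proots (\<Prod>i\<in>I. [:- d i, 1:]) = image_mset d (mset_set I)"
proof -
  have "proots (\<Prod>i\<in>I. [:- d i, 1:]) = (\<Sum>i\<in>I. {#d i#})"
    by (subst proots_prod) simp_all
  also have "\<dots> = image_mset d (mset_set I)"
    using assms by (induction I rule: finite_induct) auto
  finally show ?thesis .
qed

lemma bij_betw_lessThan_append:
  fixes n1 n2 :: nat
  assumes fJ: "bij_betw fJ {..<n1} J" and fK: "bij_betw fK {..<n2} K" and "J \<inter> K = {}"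
  shows "bij_betw (\<lambda>k. if k < n1 then fJ k else fK (k - n1)) {..<n1 + n2} (J \<union> K)"
proof -
  let ?f = "\<lambda>k. if k < n1 then fJ k else fK (k - n1)"
  have "bij_betw ?f {..<n1} J"
    using fJ by (subst bij_betw_cong[of _ ?f fJ]) auto
  moreover have "bij_betw ?f {n1..<n1 + n2} K"
  proof -
    have "bij_betw (\<lambda>k. k - n1) {n1..<n1 + n2} {..<n2}"
      by (rule bij_betw_byWitness[where f'="\<lambda>k. k + n1"]) auto
    from bij_betw_trans[OF this fK] show ?thesis
      by (subst bij_betw_cong[of _ ?f "fK \<circ> (\<lambda>k. k - n1)"]) auto
  qed
  ultimately have "bij_betw ?f ({..<n1} \<union> {n1..<n1 + n2}) (J \<union> K)"
    by (rule bij_betw_combine[OF _ _ assms(3)])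
  moreover have "{..<n1} \<union> {n1..<n1 + n2} = {..<n1 + n2}" by auto
  ultimately show ?thesis by simp
qed

lemma charpoly_block_diagonal:
  assumes "finite J" "finite K" and disj: "J \<inter> K = {}"
    and zero: "\<And>i j. i \<in> J \<Longrightarrow> j \<in> K \<Longrightarrow> A i j = 0 \<and> A j i = 0"
  shows "charpoly (J \<union> K) A = charpoly J A * charpoly K A"
proof -
  define n1 where "n1 = card J"
  define n2 where "n2 = card K"
  obtain fJ where fJ: "bij_betw fJ {..<n1} J" using finite_enumeration[OF assms(1)] n1_def by blast
  obtain fK where fK: "bij_betw fK {..<n2} K" using finite_enumeration[OF assms(2)] n2_def by blast
  define f where "f = (\<lambda>k. if k < n1 then fJ k else fK (k - n1))"
  have f: "bij_betw f {..<n1 + n2} (J \<union> K)"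
    unfolding f_def by (rule bij_betw_lessThan_append[OF fJ fK disj])
  have fJi: "\<And>i. i < n1 \<Longrightarrow> fJ i \<in> J" and fKi: "\<And>i. i < n2 \<Longrightarrow> fK i \<in> K"
    using fJ fK by (auto simp: bij_betw_def)
  have blocks: "char_poly_matrix (to_jnf (n1 + n2) f A) = four_block_mat
      (char_poly_matrix (to_jnf n1 fJ A)) (0\<^sub>m n1 n2) (0\<^sub>m n2 n1) (char_poly_matrix (to_jnf n2 fK A))"
  proof (rule eq_matI)
    fix i j assume "i < dim_row (four_block_mat (char_poly_matrix (to_jnf n1 fJ A)) (0\<^sub>m n1 n2)
        (0\<^sub>m n2 n1) (char_poly_matrix (to_jnf n2 fK A)))"
      and "j < dim_col (four_block_mat (char_poly_matrix (to_jnf n1 fJ A)) (0\<^sub>m n1 n2)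
        (0\<^sub>m n2 n1) (char_poly_matrix (to_jnf n2 fK A)))"
    then have i: "i < n1 + n2" and j: "j < n1 + n2" by auto
    have "\<not> i < n1 \<Longrightarrow> \<not> j < n1 \<Longrightarrow> (i = j) = (i - n1 = j - n1)" by auto
    then show "char_poly_matrix (to_jnf (n1 + n2) f A) $$ (i, j) = four_block_mat
        (char_poly_matrix (to_jnf n1 fJ A)) (0\<^sub>m n1 n2) (0\<^sub>m n2 n1) (char_poly_matrix (to_jnf n2 fK A)) $$ (i, j)"
      using i j zero[OF fJi fKi]
      by (cases "i < n1"; cases "j < n1") (auto simp: char_poly_matrix_to_jnf_index f_def)
  qed auto
  have "charpoly (J \<union> K) A = det (char_poly_matrix (to_jnf (n1 + n2) f A))"
    unfolding charpoly_eq_char_poly[OF f] char_poly_def ..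
  also have "\<dots> = det (char_poly_matrix (to_jnf n1 fJ A)) * det (char_poly_matrix (to_jnf n2 fK A))"
    unfolding blocks by (rule det_four_block_mat_upper_right_zero) auto
  also have "\<dots> = charpoly J A * charpoly K A"
    unfolding charpoly_eq_char_poly[OF fJ] charpoly_eq_char_poly[OF fK] char_poly_def ..
  finally show ?thesis .
qed

lemma to_jnf_orthogonal:
  assumes f: "bij_betw f {..<n} I" and "orthogonal_on I Q"
  shows "to_jnf n f Q * transpose_mat (to_jnf n f Q) = 1\<^sub>m n"
    and "transpose_mat (to_jnf n f Q) * to_jnf n f Q = 1\<^sub>m n"
proof -
  have "to_jnf n f (mat_prod I Q (mat_transp Q)) = to_jnf n f (mat_id I)"
    using assms(2) unfolding orthogonal_on_iff by simp
  then show 1: "to_jnf n f Q * transpose_mat (to_jnf n f Q) = 1\<^sub>m n"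
    unfolding to_jnf_mat_prod[OF f] to_jnf_mat_transp to_jnf_mat_id[OF f] .
  show "transpose_mat (to_jnf n f Q) * to_jnf n f Q = 1\<^sub>m n"
    by (rule mat_mult_left_right_inverse[OF _ _ 1]) auto
qed

lemma orthogonal_on_transp:
  assumes "finite I" "orthogonal_on I Q"
  shows "orthogonal_on I (mat_transp Q)"
proof -
  obtain f where f: "bij_betw f {..<card I} I" using finite_enumeration[OF assms(1)] .
  have "to_jnf (card I) f (mat_prod I (mat_transp Q) Q) = to_jnf (card I) f (mat_id I)"
    unfolding to_jnf_mat_prod[OF f] to_jnf_mat_transp to_jnf_mat_id[OF f]
    by (rule to_jnf_orthogonal(2)[OF f assms(2)])
  then have "mat_prod I (mat_transp Q) Q = mat_id I"
    by (rule to_jnf_inj[OF f supported_on_mat_prod supported_on_mat_id])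
  then show ?thesis
    using assms(2) by (simp add: orthogonal_on_iff)
qed

lemma charpoly_orthogonal_conj:
  assumes "finite I" "orthogonal_on I Q"
  shows "charpoly I (mat_prod I (mat_prod I Q A) (mat_transp Q)) = charpoly I A"
proof -
  obtain f where f: "bij_betw f {..<card I} I" using finite_enumeration[OF assms(1)] .
  let ?Q = "to_jnf (card I) f Q" and ?A = "to_jnf (card I) f A"
  have "similar_mat (?Q * ?A * transpose_mat ?Q) ?A"
    unfolding similar_mat_def similar_mat_wit_def
    by (rule exI[of _ ?Q], rule exI[of _ "transpose_mat ?Q"])
       (use to_jnf_orthogonal[OF f assms(2)] in \<open>auto simp: Let_def\<close>)
  then have "char_poly (?Q * ?A * transpose_mat ?Q) = char_poly ?A"
    by (rule char_poly_similar)
  then show ?thesis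
    unfolding charpoly_eq_char_poly[OF f] to_jnf_mat_prod[OF f] to_jnf_mat_transp .
qed

lemma spectrum_conj_diag:
  assumes "finite I" "orthogonal_on I Q"
  shows "spectrum I (conj_diag I Q d) = image_mset d (mset_set I)"
  using charpoly_orthogonal_conj[OF assms] assms(1)
  by (simp add: spectrum_def conj_diag_eq_mat_prod charpoly_mat_diag proots_prod_linear)

lemma spectrum_cong:
  "(\<And>i j. i \<in> I \<Longrightarrow> j \<in> I \<Longrightarrow> A i j = B i j) \<Longrightarrow> spectrum I A = spectrum I B"
  unfolding spectrum_def by (metis charpoly_cong)

lemma spectrum_reindex:
  "bij_betw g J I \<Longrightarrow> finite J \<Longrightarrow> spectrum J (\<lambda>i j. A (g i) (g j)) = spectrum I A"
  by (simp add: spectrum_def charpoly_reindex)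

lemma spectrum_mat_diag: "finite I \<Longrightarrow> spectrum I (mat_diag I d) = image_mset d (mset_set I)"
  by (simp add: spectrum_def charpoly_mat_diag proots_prod_linear)

lemma spectrum_block_diagonal:
  assumes "finite J" "finite K" "J \<inter> K = {}"
    and "\<And>i j. i \<in> J \<Longrightarrow> j \<in> K \<Longrightarrow> A i j = 0 \<and> A j i = 0"
  shows "spectrum (J \<union> K) A = spectrum J A + spectrum K A"
  using proots_mult[OF charpoly_nonzero charpoly_nonzero] assms
  by (simp add: spectrum_def charpoly_block_diagonal)

section \<open>Orthogonal diagonalisation of real symmetric matrices\<close>

lemma complex_eigenvector_nat:
  fixes a :: "nat \<Rightarrow> nat \<Rightarrow> real"
  assumes n: "n > 0"
  shows "\<exists>c z. (\<exists>k<n. c k \<noteq> 0) \<and> (\<forall>i<n. (\<Sum>k<n. complex_of_real (a i k) * c k) = z * c i)"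
proof -
  define Ac where "Ac = mat n n (\<lambda>(i,j). complex_of_real (a i j))"
  have Ac: "Ac \<in> carrier_mat n n" unfolding Ac_def by simp
  have "degree (char_poly Ac) = n" using degree_monic_char_poly[OF Ac] by simp
  then have "\<not> constant (poly (char_poly Ac))" using n by (simp add: constant_degree)
  then obtain z where "poly (char_poly Ac) z = 0" using fundamental_theorem_of_algebra by blast
  then have "eigenvalue Ac z" using eigenvalue_root_char_poly[OF Ac] by simp
  then obtain v where ev: "eigenvector Ac v z" unfolding eigenvalue_def by blast
  then have v: "v \<in> carrier_vec n" "v \<noteq> 0\<^sub>v n" "Ac *\<^sub>v v = z \<cdot>\<^sub>v v"
    unfolding eigenvector_def using Ac by auto
  have nz: "\<exists>k<n. v $ k \<noteq> 0"
  proof (rule ccontr)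
    assume "\<not> ?thesis"
    then have "v = 0\<^sub>v n" using v(1) by (intro eq_vecI) auto
    then show False using v(2) by simp
  qed
  have eq: "(\<Sum>k<n. complex_of_real (a i k) * v $ k) = z * v $ i" if i: "i < n" for i
  proof -
    have "(Ac *\<^sub>v v) $ i = (z \<cdot>\<^sub>v v) $ i" using v(3) by simp
    also have "(z \<cdot>\<^sub>v v) $ i = z * v $ i" using i v(1) by simp
    also have "(Ac *\<^sub>v v) $ i = row Ac i \<bullet> v" using i Ac by simp
    also have "\<dots> = (\<Sum>k<n. complex_of_real (a i k) * v $ k)"
      unfolding scalar_prod_def using v(1) i by (auto simp: Ac_def atLeast0LessThan intro!: sum.cong)
    finally show ?thesis .
  qed
  show ?thesis
    by (rule exI[of _ "\<lambda>k. v $ k"], rule exI[of _ z]) (use nz eq in auto)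
qed


lemma symmetric_eigenvalue_real:
  fixes a :: "nat \<Rightarrow> nat \<Rightarrow> real" and c :: "nat \<Rightarrow> complex"
  assumes sym: "\<And>i j. i < n \<Longrightarrow> j < n \<Longrightarrow> a i j = a j i"
    and nz: "\<exists>k<n. c k \<noteq> 0"
    and eq: "\<And>i. i < n \<Longrightarrow> (\<Sum>k<n. complex_of_real (a i k) * c k) = z * c i"
  shows "Im z = 0"
proof -
  define S where "S = (\<Sum>i<n. cnj (c i) * (\<Sum>k<n. complex_of_real (a i k) * c k))"
  define R where "R = (\<Sum>i<n. (cmod (c i))\<^sup>2)"
  have "R > 0"
  proof -
    obtain k where k: "k < n" "c k \<noteq> 0" using nz by blast
    have "(cmod (c k))\<^sup>2 \<le> R" unfolding R_def by (rule member_le_sum) (use k in auto)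
    moreover have "(cmod (c k))\<^sup>2 > 0" using k by simp
    ultimately show ?thesis by linarith
  qed
  have "S = z * complex_of_real R"
  proof -
    have "S = (\<Sum>i<n. cnj (c i) * (z * c i))" unfolding S_def by (rule sum.cong) (auto simp: eq)
    also have "\<dots> = z * (\<Sum>i<n. cnj (c i) * c i)" by (simp add: sum_distrib_left algebra_simps)
    also have "(\<Sum>i<n. cnj (c i) * c i) = complex_of_real R"
      unfolding R_def of_real_sum
      by (rule sum.cong[OF refl], subst complex_norm_square, simp add: mult.commute)
    finally show ?thesis .
  qed
  moreover have "cnj S = S"
  proof -
    have "cnj S = (\<Sum>i<n. \<Sum>k<n. complex_of_real (a i k) * (c i * cnj (c k)))"
      unfolding S_def by (simp add: sum_distrib_left algebra_simps)
    also have "\<dots> = (\<Sum>k<n. \<Sum>i<n. complex_of_real (a i k) * (c i * cnj (c k)))"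
      by (rule sum.swap)
    also have "\<dots> = (\<Sum>i<n. \<Sum>k<n. complex_of_real (a i k) * (cnj (c i) * c k))"
      by (intro sum.cong refl) (simp add: sym mult.commute)
    also have "\<dots> = S"
      unfolding S_def by (simp add: sum_distrib_left algebra_simps)
    finally show ?thesis .
  qed
  then have "Im S = 0" by (metis complex_cnj_zero_iff complex_eq_iff cnj.simps(2) neg_equal_zero)
  ultimately show ?thesis using \<open>R > 0\<close> by simp
qed

lemma symmetric_real_eigenvector_nat:
  fixes a :: "nat \<Rightarrow> nat \<Rightarrow> real"
  assumes "n > 0" and sym: "\<And>i j. i < n \<Longrightarrow> j < n \<Longrightarrow> a i j = a j i"
  shows "\<exists>u \<mu>. (\<exists>k<n. u k \<noteq> 0) \<and> (\<forall>i<n. (\<Sum>k<n. a i k * u k) = \<mu> * u i)"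
proof -
  obtain c z where nz: "\<exists>k<n. c k \<noteq> 0"
    and eq: "\<And>i. i < n \<Longrightarrow> (\<Sum>k<n. complex_of_real (a i k) * c k) = z * c i"
    using complex_eigenvector_nat[OF \<open>n > 0\<close>, of a] by blast
  define \<mu> where "\<mu> = Re z"
  have z: "z = complex_of_real \<mu>"
    using symmetric_eigenvalue_real[OF sym nz eq] unfolding \<mu>_def by (simp add: complex_eq_iff)
  have re: "(\<Sum>k<n. a i k * Re (c k)) = \<mu> * Re (c i)" if "i < n" for i
  proof -
    have "Re (\<Sum>k<n. complex_of_real (a i k) * c k) = Re (z * c i)" using eq[OF that] by simp
    then show ?thesis by (simp add: z Re_sum)
  qed
  have im: "(\<Sum>k<n. a i k * Im (c k)) = \<mu> * Im (c i)" if "i < n" for i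
  proof -
    have "Im (\<Sum>k<n. complex_of_real (a i k) * c k) = Im (z * c i)" using eq[OF that] by simp
    then show ?thesis by (simp add: z Im_sum)
  qed
  obtain k where k: "k < n" "c k \<noteq> 0" using nz by blast
  show ?thesis
  proof (cases "Re (c k) = 0")
    case True
    then have "Im (c k) \<noteq> 0" using k by (simp add: complex_eq_iff)
    then show ?thesis using im k by (intro exI[of _ "\<lambda>k. Im (c k)"] exI[of _ \<mu>]) auto
  next
    case False
    then show ?thesis using re k by (intro exI[of _ "\<lambda>k. Re (c k)"] exI[of _ \<mu>]) auto
  qed
qed

lemma symmetric_real_eigenvector:
  fixes A :: "'i rmat"
  assumes "finite I" "I \<noteq> {}" and symm: "\<And>i j. i \<in> I \<Longrightarrow> j \<in> I \<Longrightarrow> A i j = A j i"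
  shows "\<exists>v \<mu>. (\<exists>i\<in>I. v i \<noteq> 0) \<and> (\<forall>i\<in>I. (\<Sum>j\<in>I. A i j * v j) = \<mu> * v i)"
proof -
  define n where "n = card I"
  obtain f where f: "bij_betw f {..<n} I" using finite_enumeration[OF assms(1)] n_def by blast
  have "n > 0" using assms unfolding n_def by (simp add: card_gt_0_iff)
  have fI: "\<And>k. k < n \<Longrightarrow> f k \<in> I" using f by (auto simp: bij_betw_def)
  obtain u \<mu> where nz: "\<exists>k<n. u k \<noteq> 0"
    and eq: "\<And>i. i < n \<Longrightarrow> (\<Sum>k<n. A (f i) (f k) * u k) = \<mu> * u i"
    using symmetric_real_eigenvector_nat[OF \<open>n > 0\<close>, of "\<lambda>i j. A (f i) (f j)"] symm fI by blast
  define g where "g = inv_into {..<n} f"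
  have gf: "\<And>k. k < n \<Longrightarrow> g (f k) = k" and fg: "\<And>i. i \<in> I \<Longrightarrow> f (g i) = i"
    and gI: "\<And>i. i \<in> I \<Longrightarrow> g i < n"
    using f unfolding g_def bij_betw_def by (auto simp: f_inv_into_f inv_into_into)
  have "(\<Sum>j\<in>I. A i j * u (g j)) = \<mu> * u (g i)" if "i \<in> I" for i
    using eq[OF gI[OF that]] sum.reindex_bij_betw[OF f, of "\<lambda>j. A i j * u (g j)"]
    by (simp add: gf fg that)
  moreover have "\<exists>i\<in>I. u (g i) \<noteq> 0"
  proof -
    obtain k where "k < n" "u k \<noteq> 0" using nz by blast
    then show ?thesis using fI gf by (intro bexI[of _ "f k"]) auto
  qed
  ultimately show ?thesis by (intro exI[of _ "\<lambda>j. u (g j)"] exI[of _ \<mu>]) blast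
qed

lemma symmetric_unit_eigenvector:
  fixes A :: "'i rmat"
  assumes "finite I" "I \<noteq> {}" and symm: "\<And>i j. i \<in> I \<Longrightarrow> j \<in> I \<Longrightarrow> A i j = A j i"
  shows "\<exists>v \<mu>. (\<Sum>i\<in>I. (v i)\<^sup>2) = 1 \<and> (\<forall>i\<in>I. (\<Sum>j\<in>I. A i j * v j) = \<mu> * v i)"
proof -
  obtain u \<mu> where nz: "\<exists>i\<in>I. u i \<noteq> 0" and eq: "\<forall>i\<in>I. (\<Sum>j\<in>I. A i j * u j) = \<mu> * u i"
    using symmetric_real_eigenvector[of I A, OF assms(1,2) symm] by blast
  define r where "r = (\<Sum>i\<in>I. (u i)\<^sup>2)"
  have "r > 0"
  proof -
    obtain i where "i \<in> I" "u i \<noteq> 0" using nz by blast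
    then show ?thesis unfolding r_def using assms(1) by (intro sum_pos2[of I i]) auto
  qed
  have "(\<Sum>i\<in>I. (u i / sqrt r)\<^sup>2) = 1"
    using \<open>r > 0\<close> by (simp add: power_divide r_def flip: sum_divide_distrib)
  moreover have "\<forall>i\<in>I. (\<Sum>j\<in>I. A i j * (u j / sqrt r)) = \<mu> * (u i / sqrt r)"
    using eq by (simp add: sum_divide_distrib[symmetric])
  ultimately show ?thesis by (intro exI[of _ "\<lambda>j. u j / sqrt r"] exI[of _ \<mu>]) blast
qed

definition reflection :: "'i set \<Rightarrow> ('i \<Rightarrow> real) \<Rightarrow> 'i rmat" where
  "reflection I w = (\<lambda>i j. if i \<in> I \<and> j \<in> I
     then (if i = j then 1 else 0) - 2 / (\<Sum>k\<in>I. (w k)\<^sup>2) * w i * w j else 0)"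

lemma supported_on_reflection [simp]: "supported_on I (reflection I w)"
  by (simp add: supported_on_def reflection_def)

lemma mat_transp_reflection [simp]: "mat_transp (reflection I w) = reflection I w"
  by (auto simp: mat_transp_def reflection_def fun_eq_iff mult.commute)

lemma reflection_involution:
  assumes "finite I"
  shows "mat_prod I (reflection I w) (reflection I w) = mat_id I"
proof (intro ext)
  fix i j
  define c where "c = (\<Sum>k\<in>I. (w k)\<^sup>2)"
  define a where "a = 2 / c"
  have a2: "a * a * c = 2 * a" unfolding a_def by (cases "c = 0") (auto simp: field_simps)
  show "mat_prod I (reflection I w) (reflection I w) i j = mat_id I i j"
  proof (cases "i \<in> I \<and> j \<in> I")
    case True
    have "(\<Sum>k\<in>I. reflection I w i k * reflection I w k j) = (\<Sum>k\<in>I.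
        (if i = k then (if k = j then 1 else 0) else 0) - (if i = k then a * w k * w j else 0)
        - (if k = j then a * w i * w k else 0) + (a * a * w i * w j) * (w k)\<^sup>2)"
      using True by (intro sum.cong refl)
        (auto simp: reflection_def a_def c_def algebra_simps power2_eq_square)
    also have "\<dots> = (if i = j then 1 else 0) - 2 * a * w i * w j + (a * a * c) * (w i * w j)"
      using True assms unfolding c_def
      by (simp add: sum.distrib sum_subtractf sum_distrib_left[symmetric] algebra_simps)
    finally show ?thesis
      using True a2 by (simp add: mat_prod_def mat_id_def)
  qed (auto simp: mat_prod_def mat_id_def)
qed

lemma householder_column:
  assumes "finite I" "x \<in> I" "(\<Sum>i\<in>I. (v i)\<^sup>2) = 1" "i \<in> I"
  shows "reflection I (\<lambda>k. v k - (if k = x then 1 else 0)) i x = v i"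
proof -
  define w where "w = (\<lambda>k. v k - (if k = x then 1 else 0))"
  define c where "c = (\<Sum>k\<in>I. (w k)\<^sup>2)"
  have c: "c = - 2 * w x"
  proof -
    have "c = (\<Sum>k\<in>I. (v k)\<^sup>2 - 2 * (if k = x then v k else 0) + (if k = x then 1 else 0))"
      unfolding c_def w_def by (intro sum.cong refl) (auto simp: power2_eq_square algebra_simps)
    also have "\<dots> = 1 - 2 * v x + 1"
      using assms by (simp add: sum.distrib sum_subtractf sum_distrib_left[symmetric])
    finally show ?thesis by (simp add: w_def)
  qed
  show ?thesis
  proof (cases "c = 0")
    case True
    then have "w i = 0"
      using assms(1,4) unfolding c_def by (simp add: sum_nonneg_eq_0_iff)
    then show ?thesis
      using True assms(2,4) by (auto simp: reflection_def w_def c_def split: if_splits)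
  next
    case False
    then have "2 / c * w i * w x = - w i" using c by (simp add: field_simps)
    then show ?thesis
      using assms(2,4) by (simp add: reflection_def w_def[symmetric] c_def[symmetric])
        (simp add: w_def)
  qed
qed

lemma orthogonal_on_mat_prod:
  assumes "finite I" "orthogonal_on I P" "orthogonal_on I Q"
  shows "orthogonal_on I (mat_prod I P Q)"
proof -
  have "mat_prod I (mat_prod I P Q) (mat_transp (mat_prod I P Q))
      = mat_prod I P (mat_prod I (mat_prod I Q (mat_transp Q)) (mat_transp P))"
    by (simp add: mat_transp_mat_prod mat_prod_assoc[OF assms(1)])
  also have "\<dots> = mat_id I"
    using assms by (simp add: orthogonal_on_iff mat_prod_mat_id_left)
  finally show ?thesis by (simp add: orthogonal_on_iff)
qed

lemma conj_diag_mat_prod: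
  assumes "finite I"
  shows "conj_diag I (mat_prod I P Q) d = mat_prod I (mat_prod I P (conj_diag I Q d)) (mat_transp P)"
  by (simp add: conj_diag_eq_mat_prod[OF assms] mat_transp_mat_prod mat_prod_assoc[OF assms])

text \<open>Deflation: if \<open>e\<^sub>x\<close> is an eigenvector of \<open>B\<close>, extending an eigenbasis of \<open>B\<close> off \<open>x\<close> by
  \<open>e\<^sub>x\<close> diagonalises \<open>B\<close>.\<close>

lemma conj_diag_insert:
  assumes "finite F" "x \<notin> F" "orthogonal_on F Q"
    and symm: "mat_transp B = B"
    and col: "\<And>i. i \<in> insert x F \<Longrightarrow> B i x = (if i = x then \<mu> else 0)"
    and rest: "\<And>i j. i \<in> F \<Longrightarrow> j \<in> F \<Longrightarrow> B i j = conj_diag F Q d i j"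
    and supp: "supported_on (insert x F) B"
  defines "Q' \<equiv> Q(x := (\<lambda>k. if k = x then 1 else 0))"
  shows "orthogonal_on (insert x F) Q'" "B = conj_diag (insert x F) Q' (d(x := \<mu>))"
proof -
  have Q: "supported_on F Q" "\<And>i j. i \<in> F \<Longrightarrow> j \<in> F \<Longrightarrow> (\<Sum>k\<in>F. Q i k * Q j k) = (if i = j then 1 else 0)"
    using assms(3) by (auto simp: orthogonal_on_def supported_on_def)
  have Q'x: "Q' i x = (if i = x then 1 else 0)" for i
    using Q(1) assms(2) by (simp add: Q'_def supported_on_def)
  have Q'F: "Q' i k = Q i k" if "k \<in> F" for i k
    using Q(1) assms(2) that by (auto simp: Q'_def supported_on_def)
  have Qx: "Q x k = 0" for k
    using Q(1) assms(2) by (simp add: supported_on_def)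
  have split: "(\<Sum>k\<in>insert x F. f k) = f x + (\<Sum>k\<in>F. f k)" for f :: "_ \<Rightarrow> real"
    using assms(1,2) by simp
  have "(\<Sum>k\<in>insert x F. Q' i k * Q' j k) = (if i = j then 1 else 0)"
    if "i \<in> insert x F" "j \<in> insert x F" for i j
    using that Q(2)[of i j] by (auto simp: split Q'x Q'F Qx cong: sum.cong)
  moreover have "supported_on (insert x F) Q'"
    using Q(1) by (auto simp: Q'_def supported_on_def)
  ultimately show "orthogonal_on (insert x F) Q'"
    by (auto simp: orthogonal_on_def supported_on_def)
  show "B = conj_diag (insert x F) Q' (d(x := \<mu>))"
  proof (intro ext)
    fix i j
    have Bsym: "B i j = B j i" by (rule mat_transp_eqD[OF symm])
    have "B i j = (\<Sum>k\<in>insert x F. Q' i k * (d(x := \<mu>)) k * Q' j k)"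
      if "i \<in> insert x F" "j \<in> insert x F"
      using that rest[of i j] col[of i] col[of j] Bsym assms(2)
      by (auto simp: split Q'x Q'F Qx conj_diag_def intro!: sum.cong)
    then show "B i j = conj_diag (insert x F) Q' (d(x := \<mu>)) i j"
      using supp by (auto simp: conj_diag_def supported_on_def)
  qed
qed

lemma householder_deflation:
  assumes fin: "finite I" and "x \<in> I" and symm: "mat_transp A = A"
  obtains H \<mu> where "orthogonal_on I H" "mat_transp H = H" "mat_prod I H H = mat_id I"
    "\<forall>i\<in>I. mat_prod I H (mat_prod I A H) i x = (if i = x then \<mu> else 0)"
proof -
  obtain v \<mu> where v: "(\<Sum>i\<in>I. (v i)\<^sup>2) = 1"
    and ev: "\<And>i. i \<in> I \<Longrightarrow> (\<Sum>j\<in>I. A i j * v j) = \<mu> * v i"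
  proof -
    have "I \<noteq> {}" "\<And>i j. A i j = A j i"
      using \<open>x \<in> I\<close> mat_transp_eqD[OF symm] by auto
    then have "\<exists>v \<mu>. (\<Sum>i\<in>I. (v i)\<^sup>2) = 1 \<and> (\<forall>i\<in>I. (\<Sum>j\<in>I. A i j * v j) = \<mu> * v i)"
      using symmetric_unit_eigenvector[of I A, OF fin] by blast
    then show ?thesis using that by blast
  qed
  define H where "H = reflection I (\<lambda>k. v k - (if k = x then 1 else 0))"
  have Hx: "\<And>i. i \<in> I \<Longrightarrow> H i x = v i"
    unfolding H_def using householder_column[OF fin \<open>x \<in> I\<close> v] by simp
  have HH: "mat_prod I H H = mat_id I"
    unfolding H_def by (rule reflection_involution[OF fin])
  have col: "mat_prod I H (mat_prod I A H) i x = (if i = x then \<mu> else 0)" if "i \<in> I" for i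
  proof -
    have "mat_prod I A H l x = \<mu> * H l x" if "l \<in> I" for l
    proof -
      have "(\<Sum>k\<in>I. A l k * H k x) = (\<Sum>k\<in>I. A l k * v k)"
        using Hx by (intro sum.cong) auto
      then show ?thesis
        using that \<open>x \<in> I\<close> ev[OF that] Hx[OF that] by (simp add: mat_prod_def)
    qed
    then have "mat_prod I H (mat_prod I A H) i x = (\<Sum>l\<in>I. H i l * (\<mu> * H l x))"
      using \<open>i \<in> I\<close> \<open>x \<in> I\<close> unfolding mat_prod_def[of I H] by (auto intro!: sum.cong)
    also have "\<dots> = \<mu> * mat_prod I H H i x"
      using that \<open>x \<in> I\<close> by (simp add: mat_prod_def sum_distrib_left algebra_simps)
    finally show ?thesis using that by (simp add: HH mat_id_def)
  qed
  show thesis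
  proof (rule that[of H \<mu>])
    show "orthogonal_on I H" using HH by (simp add: orthogonal_on_iff H_def)
  qed (use HH col in \<open>simp_all add: H_def\<close>)
qed

theorem symmetric_orthogonal_diagonalisation:
  assumes "finite I" "supported_on I A" "mat_transp A = A"
  shows "\<exists>Q d. orthogonal_on I Q \<and> A = conj_diag I Q d"
  using assms
proof (induction I arbitrary: A rule: finite_induct)
  case empty
  then show ?case
    by (intro exI[of _ "\<lambda>_ _. 0"] exI[of _ "\<lambda>_. 0"])
       (auto simp: orthogonal_on_def conj_diag_def supported_on_def fun_eq_iff)
next
  case (insert x F A)
  let ?I = "insert x F"
  have fin: "finite ?I" using insert by simp
  obtain H \<mu> where H: "orthogonal_on ?I H" "mat_transp H = H" and HH: "mat_prod ?I H H = mat_id ?I"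
    and col: "\<forall>i\<in>?I. mat_prod ?I H (mat_prod ?I A H) i x = (if i = x then \<mu> else 0)"
    by (rule householder_deflation[OF fin insertI1 insert.prems(2)])
  define B where "B = mat_prod ?I H (mat_prod ?I A H)"
  have "mat_prod ?I H (mat_prod ?I B H) = mat_prod ?I (mat_prod ?I H H) (mat_prod ?I A (mat_prod ?I H H))"
    by (simp add: B_def mat_prod_assoc[OF fin])
  then have A: "A = mat_prod ?I H (mat_prod ?I B H)"
    using insert.prems(1) fin by (simp add: HH mat_prod_mat_id_left mat_prod_mat_id_right)
  have symB: "mat_transp B = B"
    using insert.prems(2) H(2) by (simp add: B_def mat_transp_mat_prod mat_prod_assoc[OF fin])
  define B' where "B' = (\<lambda>i j. if i \<in> F \<and> j \<in> F then B i j else 0)"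
  have "supported_on F B'" "mat_transp B' = B'"
    using symB by (auto simp: B'_def supported_on_def mat_transp_def fun_eq_iff)
  then obtain Q d where Q: "orthogonal_on F Q" and B': "B' = conj_diag F Q d"
    using insert.IH by blast
  define Q' where "Q' = Q(x := (\<lambda>k. if k = x then 1 else 0))"
  have "B i j = conj_diag F Q d i j" if "i \<in> F" "j \<in> F" for i j
    using fun_cong[OF fun_cong[OF B', of i], of j] that by (simp add: B'_def)
  then have Q': "orthogonal_on ?I Q'" and B: "B = conj_diag ?I Q' (d(x := \<mu>))"
    using conj_diag_insert[OF insert.hyps Q symB] col unfolding Q'_def by (simp_all add: B_def)
  have "A = conj_diag ?I (mat_prod ?I H Q') (d(x := \<mu>))"
    unfolding conj_diag_mat_prod[OF fin] A B by (simp add: H(2) mat_prod_assoc[OF fin])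
  then show ?case using orthogonal_on_mat_prod[OF fin H(1) Q'] by blast
qed

lemma symmetric_conj_diag_of_spectrum:
  assumes "finite I" "supported_on I A" "mat_transp A = A"
    and spec: "spectrum I A = image_mset d (mset_set I)"
  obtains Q where "orthogonal_on I Q" "A = conj_diag I Q d"
proof -
  obtain Q1 d1 where Q1: "orthogonal_on I Q1" and A: "A = conj_diag I Q1 d1"
    using symmetric_orthogonal_diagonalisation[OF assms(1-3)] by blast
  have "image_mset d1 (mset_set I) = image_mset d (mset_set I)"
    using spec spectrum_conj_diag[OF assms(1) Q1] A by simp
  then obtain p where p: "p permutes I" and d1: "\<forall>k\<in>I. d1 k = d (p k)"
    using image_mset_eq_implies_permutes[OF assms(1)] by blast
  define Q where "Q = (\<lambda>i k. Q1 i (inv_into UNIV p k))"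
  have sum_perm: "(\<Sum>k\<in>I. g (inv_into UNIV p k)) = (\<Sum>k\<in>I. g k)" for g :: "_ \<Rightarrow> real"
    using sum.permute[OF permutes_inv[OF p], of g] by (simp add: comp_def)
  have "orthogonal_on I Q"
    using Q1 permutes_not_in[OF permutes_inv[OF p]]
    by (auto simp: orthogonal_on_def Q_def sum_perm[of "\<lambda>k. Q1 _ k * Q1 _ k"])
  moreover have "conj_diag I Q1 d1 = conj_diag I Q d"
  proof -
    have "(\<Sum>k\<in>I. Q1 i k * d1 k * Q1 j k) = (\<Sum>k\<in>I. Q1 i (inv_into UNIV p k) * d k * Q1 j (inv_into UNIV p k))" for i j
    proof -
      have "(\<Sum>k\<in>I. Q1 i k * d1 k * Q1 j k) = (\<Sum>k\<in>I. Q1 i k * d (p k) * Q1 j k)"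
        using d1 by (intro sum.cong) auto
      also have "\<dots> = (\<Sum>k\<in>I. Q1 i (inv_into UNIV p k) * d (p (inv_into UNIV p k)) * Q1 j (inv_into UNIV p k))"
        by (rule sum_perm[symmetric])
      finally show ?thesis by (simp add: permutes_inverses(1)[OF p])
    qed
    then show ?thesis unfolding conj_diag_def Q_def by presburger
  qed
  ultimately show thesis using that A by simp
qed

section \<open>Symmetric block matrices on a disjoint union\<close>

definition sym_block_mat :: "'a rmat \<Rightarrow> ('a \<Rightarrow> 'b \<Rightarrow> real) \<Rightarrow> 'b rmat \<Rightarrow> ('a + 'b) rmat" where
  "sym_block_mat A B C = (\<lambda>z z'. case (z, z') of
       (Inl a, Inl b) \<Rightarrow> A a b
     | (Inl a, Inr h) \<Rightarrow> B a h
     | (Inr h, Inl a) \<Rightarrow> B a h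
     | (Inr h, Inr h') \<Rightarrow> C h h')"

lemma sym_block_mat_simps [simp]:
  "sym_block_mat A B C (Inl a) (Inl b) = A a b"
  "sym_block_mat A B C (Inl a) (Inr h) = B a h"
  "sym_block_mat A B C (Inr h) (Inl a) = B a h"
  "sym_block_mat A B C (Inr h) (Inr h') = C h h'"
  by (simp_all add: sym_block_mat_def)

lemma Plus_iff [simp]: "Inl a \<in> P <+> Q \<longleftrightarrow> a \<in> P" "Inr h \<in> P <+> Q \<longleftrightarrow> h \<in> Q"
  by auto

lemma supported_on_sym_block_mat:
  assumes "supported_on P A" "\<And>a h. a \<notin> P \<or> h \<notin> Q \<Longrightarrow> B a h = 0" "supported_on Q C"
  shows "supported_on (P <+> Q) (sym_block_mat A B C)"
  unfolding supported_on_def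
proof (intro allI impI)
  fix z z' :: "'a + 'b" assume "z \<notin> P <+> Q \<or> z' \<notin> P <+> Q"
  then show "sym_block_mat A B C z z' = 0"
    using assms by (cases z; cases z') (auto simp: supported_on_def)
qed

lemma mat_id_Plus: "mat_id (P <+> Q) = sym_block_mat (mat_id P) (\<lambda>_ _. 0) (mat_id Q)"
proof (intro ext)
  fix z z' :: "'a + 'b"
  show "mat_id (P <+> Q) z z' = sym_block_mat (mat_id P) (\<lambda>_ _. 0) (mat_id Q) z z'"
    by (cases z; cases z') (auto simp: mat_id_def)
qed

lemma conj_sym_block_mat:
  assumes "finite P" "finite Q" "supported_on P A" "\<And>a h. a \<notin> P \<or> h \<notin> Q \<Longrightarrow> B a h = 0"
    "supported_on Q C" "supported_on Q U"
  defines "T \<equiv> sym_block_mat (mat_id P) (\<lambda>_ _. 0) U"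
  shows "mat_prod (P <+> Q) (mat_prod (P <+> Q) T (sym_block_mat A B C)) (mat_transp T) =
    sym_block_mat A (\<lambda>a. mat_vec Q U (B a)) (mat_prod Q (mat_prod Q U C) (mat_transp U))"
    (is "?L = ?R")
proof (intro ext)
  fix z z' :: "'a + 'b"
  let ?Z = "P <+> Q" and ?X = "sym_block_mat A B C"
  have row_l: "(\<Sum>q\<in>?Z. T (Inl a) q * f q) = f (Inl a)" if "a \<in> P" for a f
    using assms(1,2) that
    by (simp add: sum.Plus T_def mat_id_def if_distrib[of "\<lambda>x. x * _"] cong: if_cong)
  have row_r: "(\<Sum>q\<in>?Z. T (Inr h) q * f q) = (\<Sum>k\<in>Q. U h k * f (Inr k))" for h f
    using assms(1,2) by (simp add: sum.Plus T_def)
  have inner_l: "(\<Sum>p\<in>?Z. T (Inl a) p * ?X p q) = ?X (Inl a) q" if "a \<in> P" for a q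
    using row_l[OF that] .
  have inner_r: "(\<Sum>p\<in>?Z. T (Inr h) p * ?X p q) = (\<Sum>k\<in>Q. U h k * ?X (Inr k) q)" for h q
    using row_r .
  have entry: "?L w w' = (\<Sum>q\<in>?Z. T w' q * (\<Sum>p\<in>?Z. T w p * ?X p q))"
    if "w \<in> ?Z" "w' \<in> ?Z" for w w'
    using that by (simp add: mat_prod_def mat_transp_def mult.commute cong: sum.cong)
  have "supported_on ?Z ?R"
  proof (rule supported_on_sym_block_mat)
    show "mat_vec Q U (B a) h = 0" if "a \<notin> P \<or> h \<notin> Q" for a h
      using that assms(4,6) by (auto simp: mat_vec_def supported_on_def)
  qed (simp_all add: assms(3))
  moreover have "?L z z' = ?R z z'" if "z \<in> ?Z" "z' \<in> ?Z"
  proof (cases z; cases z')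
    fix a b assume "z = Inl a" "z' = Inl b"
    then show ?thesis using that by (simp add: entry inner_l row_l)
  next
    fix a h assume "z = Inl a" "z' = Inr h"
    then show ?thesis using that by (simp add: entry inner_l row_r mat_vec_def)
  next
    fix h a assume "z = Inr h" "z' = Inl a"
    then show ?thesis using that by (simp add: entry inner_r row_l mat_vec_def)
  next
    fix h h' assume "z = Inr h" "z' = Inr h'"
    then show ?thesis using that
      by (simp add: entry inner_r row_r mat_prod_def mat_transp_def mult.commute cong: sum.cong)
  qed
  ultimately show "?L z z' = ?R z z'"
    by (cases "z \<in> ?Z \<and> z' \<in> ?Z") (auto simp: mat_prod_def supported_on_def)
qed

lemma orthogonal_on_sym_block_mat:
  assumes "finite P" "finite Q" "orthogonal_on Q U"
  shows "orthogonal_on (P <+> Q) (sym_block_mat (mat_id P) (\<lambda>_ _. 0) U)"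
proof -
  let ?T = "sym_block_mat (mat_id P) (\<lambda>_ _. 0) U" and ?Z = "P <+> Q"
  have U: "supported_on Q U" "mat_prod Q U (mat_transp U) = mat_id Q"
    using assms(3) by (simp_all add: orthogonal_on_iff)
  have T: "supported_on ?Z ?T"
    using U(1) by (intro supported_on_sym_block_mat) auto
  have "mat_prod ?Z ?T (mat_transp ?T) = mat_prod ?Z (mat_prod ?Z ?T (mat_id ?Z)) (mat_transp ?T)"
    using T assms(1,2) by (simp add: mat_prod_mat_id_right)
  also have "\<dots> = mat_id ?Z"
    unfolding mat_id_Plus
    by (subst conj_sym_block_mat) (use assms(1,2) U in \<open>simp_all add: mat_prod_mat_id_right mat_vec_def\<close>)
  finally show ?thesis using T by (simp add: orthogonal_on_iff)
qed

lemma spectrum_sym_block_mat_rotate: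
  assumes "finite P" "finite Q" "supported_on P A" "\<And>a h. a \<notin> P \<or> h \<notin> Q \<Longrightarrow> B a h = 0"
    "supported_on Q C" "orthogonal_on Q U"
  shows "spectrum (P <+> Q)
      (sym_block_mat A (\<lambda>a. mat_vec Q U (B a)) (mat_prod Q (mat_prod Q U C) (mat_transp U))) =
    spectrum (P <+> Q) (sym_block_mat A B C)"
proof -
  have "supported_on Q U" using assms(6) by (simp add: orthogonal_on_iff)
  then show ?thesis
    using charpoly_orthogonal_conj[OF finite_Plus[OF assms(1,2)] orthogonal_on_sym_block_mat[OF assms(1,2,6)],
        of "sym_block_mat A B C"] conj_sym_block_mat[OF assms(1-5)]
    by (simp add: spectrum_def)
qed

lemma spectrum_sym_block_mat_change_basis:
  assumes "finite P" "finite Q" "supported_on P A" "\<And>a h. a \<notin> P \<or> h \<notin> Q \<Longrightarrow> B a h = 0"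
    and V: "orthogonal_on Q V" and U: "orthogonal_on Q U"
  shows "spectrum (P <+> Q) (sym_block_mat A (\<lambda>a. mat_vec Q U (mat_vec Q (mat_transp V) (B a)))
      (conj_diag Q U d)) = spectrum (P <+> Q) (sym_block_mat A B (conj_diag Q V d))"
proof -
  define R where "R = mat_prod Q U (mat_transp V)"
  have R: "orthogonal_on Q R"
    unfolding R_def by (rule orthogonal_on_mat_prod[OF assms(2) U orthogonal_on_transp[OF assms(2) V]])
  have "mat_prod Q R V = mat_prod Q U (mat_prod Q (mat_transp V) V)"
    by (simp add: R_def mat_prod_assoc[OF assms(2)])
  also have "\<dots> = U"
    using U orthogonal_on_transp[OF assms(2) V] assms(2)
    by (simp add: orthogonal_on_iff mat_prod_mat_id_right)
  finally have "conj_diag Q U d = mat_prod Q (mat_prod Q R (conj_diag Q V d)) (mat_transp R)"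
    using conj_diag_mat_prod[OF assms(2), of R V d] by simp
  moreover have "mat_vec Q R (B a) = mat_vec Q U (mat_vec Q (mat_transp V) (B a))" for a
  proof
    fix h
    show "mat_vec Q R (B a) h = mat_vec Q U (mat_vec Q (mat_transp V) (B a)) h"
      using R U mat_vec_mat_prod[OF assms(2), of h U "mat_transp V"]
      by (cases "h \<in> Q") (simp_all add: R_def orthogonal_on_iff mat_vec_support)
  qed
  moreover have "supported_on Q (conj_diag Q V d)"
    by (simp add: supported_on_def conj_diag_def)
  ultimately show ?thesis
    using spectrum_sym_block_mat_rotate[of P Q A B, OF assms(1-4) _ R] by simp
qed

lemma spectrum_sym_block_mat_transport:
  assumes "V1 \<inter> V2 = {}" "bij_betw \<phi> W V2" "mat_transp M = M" "finite V1" "finite W"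
  shows "spectrum (V1 <+> W)
      (sym_block_mat (submatrix M V1) (\<lambda>a h. M a (\<phi> h)) (\<lambda>h h'. M (\<phi> h) (\<phi> h'))) =
    spectrum (V1 \<union> V2) M"
proof -
  let ?g = "case_sum id \<phi>"
  define \<psi> where "\<psi> = inv_into W \<phi>"
  have \<psi>: "\<And>v. v \<in> V2 \<Longrightarrow> \<psi> v \<in> W" "\<And>w. w \<in> W \<Longrightarrow> \<psi> (\<phi> w) = w"
    "\<And>v. v \<in> V2 \<Longrightarrow> \<phi> (\<psi> v) = v"
    using assms(2) unfolding \<psi>_def bij_betw_def
    by (auto simp: inv_into_into f_inv_into_f)
  have "bij_betw ?g (V1 <+> W) (V1 \<union> V2)"
    by (rule bij_betw_byWitness[where f'="\<lambda>v. if v \<in> V1 then Inl v else Inr (\<psi> v)"])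
       (use assms(1,2) \<psi> in \<open>auto simp: bij_betw_def\<close>)
  then have reindex: "spectrum (V1 <+> W) (\<lambda>z z'. M (?g z) (?g z')) = spectrum (V1 \<union> V2) M"
    by (rule spectrum_reindex) (use assms(4,5) in simp)
  have symm: "M x y = M y x" for x y
    by (rule mat_transp_eqD[OF assms(3)])
  have "spectrum (V1 <+> W) (\<lambda>z z'. M (?g z) (?g z')) = spectrum (V1 <+> W)
      (sym_block_mat (submatrix M V1) (\<lambda>a h. M a (\<phi> h)) (\<lambda>h h'. M (\<phi> h) (\<phi> h')))"
  proof (intro spectrum_cong)
    fix z z' :: "'a + 'b" assume "z \<in> V1 <+> W" "z' \<in> V1 <+> W"
    then show "M (?g z) (?g z') = sym_block_mat (submatrix M V1) (\<lambda>a h. M a (\<phi> h))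
        (\<lambda>h h'. M (\<phi> h) (\<phi> h')) z z'"
      by (cases z; cases z') (simp_all add: submatrix_def symm)
  qed
  with reindex show ?thesis by simp
qed

lemma S_set_supported_on: "M \<in> S(G) \<Longrightarrow> supported_on (verts G) M"
  by (simp add: S_set_def supported_on_def)

lemma S_set_mat_transp:
  assumes "M \<in> S(G)"
  shows "mat_transp M = M"
proof (intro ext)
  fix i j
  have "M i j = M j i"
    using assms by (cases "i \<in> verts G \<and> j \<in> verts G") (auto simp: S_set_def)
  then show "mat_transp M i j = M i j" by (simp add: mat_transp_def)
qed

lemma submatrix_in_S_induced:
  assumes "M \<in> S(G)"
  shows "submatrix M W \<in> S(induced G W)"
proof -
  have "verts (induced G W) = verts G \<inter> W"
    and "\<And>i j. adj (induced G W) i j \<longleftrightarrow> i \<in> W \<and> j \<in> W \<and> adj G i j"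
    by (simp_all add: induced_def verts_def adj_def)
  with assms show ?thesis
    unfolding S_set_def mem_Collect_eq submatrix_def by auto
qed

lemma verts_partial_join: "verts (partial_join G X H) = verts G <+> verts H"
  by (simp add: partial_join_def verts_def Plus_def)

lemma sym_block_mat_in_S_partial_join:
  assumes "A \<in> S(G)" "C \<in> S(H)"
    and "\<And>a h. a \<notin> verts G \<or> h \<notin> verts H \<Longrightarrow> B a h = 0"
    and "\<And>a h. a \<in> verts G \<Longrightarrow> h \<in> verts H \<Longrightarrow> B a h \<noteq> 0 \<longleftrightarrow> a \<in> X"
  shows "sym_block_mat A B C \<in> S(partial_join G X H)"
proof -
  have adj: "adj (partial_join G X H) z z' = (case (z, z') of
       (Inl a, Inl b) \<Rightarrow> adj G a b | (Inr a, Inr b) \<Rightarrow> adj H a b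
     | (Inl a, Inr b) \<Rightarrow> a \<in> X \<and> a \<in> verts G \<and> b \<in> verts H
     | (Inr a, Inl b) \<Rightarrow> b \<in> X \<and> b \<in> verts G \<and> a \<in> verts H)" for z z'
    by (simp add: partial_join_def adj_def)
  show ?thesis
    unfolding S_set_def verts_partial_join mem_Collect_eq
  proof (intro conjI allI ballI impI)
    fix z z' :: "'a + 'b"
    show "sym_block_mat A B C z z' = 0" if "z \<notin> verts G <+> verts H \<or> z' \<notin> verts G <+> verts H"
      using that assms(1-3) by (cases z; cases z') (auto simp: S_set_def)
    show "sym_block_mat A B C z z' = sym_block_mat A B C z' z"
      if "z \<in> verts G <+> verts H" "z' \<in> verts G <+> verts H"
      using that assms(1,2) by (cases z; cases z') (auto simp: S_set_def)
    show "(sym_block_mat A B C z z' \<noteq> 0) = adj (partial_join G X H) z z'"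
      if "z \<in> verts G <+> verts H" "z' \<in> verts G <+> verts H" "z \<noteq> z'"
      using that assms(1,2,4) by (cases z; cases z') (auto simp: S_set_def adj)
  qed
qed

lemma vertex_boundary_iff_nonzero:
  assumes "M \<in> S(G)" "W \<subseteq> verts G" "a \<in> verts G" "a \<notin> W"
  shows "a \<in> vertex_boundary G W \<longleftrightarrow> (\<exists>w\<in>W. M a w \<noteq> 0)"
proof -
  have S: "\<forall>i\<in>verts G. \<forall>j\<in>verts G. i \<noteq> j \<longrightarrow> (M i j \<noteq> 0) = adj G i j"
    using assms(1) by (simp add: S_set_def)
  have "M a w \<noteq> 0 \<longleftrightarrow> adj G a w" if "w \<in> W" for w
  proof -
    have "w \<in> verts G" "a \<noteq> w" using assms(2,4) that by auto
    then show ?thesis using S assms(3) by simp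
  qed
  then show ?thesis using assms(3,4) by (auto simp: vertex_boundary_def)
qed

section \<open>The padded block model\<close>

lemma ex_image_mset_eq:
  assumes "finite E" "size \<sigma> = card E"
  shows "\<exists>e. image_mset e (mset_set E) = \<sigma>"
  using assms
proof (induction E arbitrary: \<sigma> rule: finite_induct)
  case (insert h E \<sigma>)
  then obtain s where s: "s \<in># \<sigma>" by (metis card_insert_disjoint multiset_nonemptyE size_empty
    nat.distinct(1))
  then have "size (\<sigma> - {#s#}) = card E" using insert by (simp add: size_Diff_singleton)
  then obtain e where e: "image_mset e (mset_set E) = \<sigma> - {#s#}" using insert.IH by blast
  have "image_mset (e(h := s)) (mset_set E) = image_mset e (mset_set E)"
    using insert.hyps by (intro image_mset_cong) auto
  then have "image_mset (e(h := s)) (mset_set (insert h E)) = \<sigma>"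
    using insert.hyps e s by simp
  then show ?case by blast
qed simp

lemma spectrum_padded_block:
  assumes fin: "finite V1" "finite W" "finite E" and disj: "V1 \<inter> V2 = {}" "W \<inter> E = {}"
    and \<phi>: "bij_betw \<phi> W V2" and symm: "mat_transp M = M"
    and B: "\<And>a h. a \<in> V1 \<Longrightarrow> h \<in> W \<Longrightarrow> B a h = M a (\<phi> h)" "\<And>a h. h \<in> E \<Longrightarrow> B a h = 0"
    and C: "\<And>h h'. h \<in> W \<Longrightarrow> h' \<in> W \<Longrightarrow> C h h' = M (\<phi> h) (\<phi> h')"
      "\<And>h h'. h \<in> W \<Longrightarrow> h' \<in> E \<Longrightarrow> C h h' = 0 \<and> C h' h = 0"
      "\<And>h h'. h \<in> E \<Longrightarrow> h' \<in> E \<Longrightarrow> C h h' = mat_diag E e h h'"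
  shows "spectrum (W \<union> E) C = spectrum V2 (submatrix M V2) + image_mset e (mset_set E)"
    and "spectrum (V1 <+> (W \<union> E)) (sym_block_mat (submatrix M V1) B C) =
      spectrum (V1 \<union> V2) M + image_mset e (mset_set E)"
proof -
  have C_E: "spectrum E C = image_mset e (mset_set E)"
    using spectrum_cong[of E C "mat_diag E e"] C(3) spectrum_mat_diag[OF fin(3)] by simp
  have "spectrum W C = spectrum W (\<lambda>h h'. submatrix M V2 (\<phi> h) (\<phi> h'))"
    using \<phi> C(1) by (intro spectrum_cong) (auto simp: submatrix_def bij_betw_def)
  then have "spectrum W C = spectrum V2 (submatrix M V2)"
    using spectrum_reindex[OF \<phi> fin(2)] by simp
  then show "spectrum (W \<union> E) C = spectrum V2 (submatrix M V2) + image_mset e (mset_set E)"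
    using spectrum_block_diagonal[OF fin(2,3) disj(2) C(2)] C_E by simp
  let ?X = "sym_block_mat (submatrix M V1) B C"
  have "spectrum (V1 <+> W) ?X = spectrum (V1 <+> W)
      (sym_block_mat (submatrix M V1) (\<lambda>a h. M a (\<phi> h)) (\<lambda>h h'. M (\<phi> h) (\<phi> h')))"
  proof (intro spectrum_cong)
    fix z z' :: "'a + 'b" assume "z \<in> V1 <+> W" "z' \<in> V1 <+> W"
    then show "?X z z' = sym_block_mat (submatrix M V1) (\<lambda>a h. M a (\<phi> h)) (\<lambda>h h'. M (\<phi> h) (\<phi> h')) z z'"
      using B(1) C(1) by (cases z; cases z') auto
  qed
  also have "\<dots> = spectrum (V1 \<union> V2) M"
    by (rule spectrum_sym_block_mat_transport[OF disj(1) \<phi> symm fin(1,2)])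
  finally have X_W: "spectrum (V1 <+> W) ?X = spectrum (V1 \<union> V2) M" .
  have "bij_betw Inr E ({} <+> E)" by (auto simp: bij_betw_def Plus_def)
  from spectrum_reindex[OF this fin(3), of ?X] have X_E: "spectrum ({} <+> E) ?X = image_mset e (mset_set E)"
    by (simp add: C_E)
  have "?X z z' = 0 \<and> ?X z' z = 0" if "z \<in> V1 <+> W" "z' \<in> {} <+> E" for z z'
    using that B(2) C(2) by auto
  moreover have "V1 <+> (W \<union> E) = (V1 <+> W) \<union> ({} <+> E)"
    by (auto simp: Plus_def)
  ultimately show "spectrum (V1 <+> (W \<union> E)) ?X = spectrum (V1 \<union> V2) M + image_mset e (mset_set E)"
    using spectrum_block_diagonal[of "V1 <+> W" "{} <+> E" ?X] fin disj(2) X_W X_E by auto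
qed

lemma obtain_padding:
  assumes "finite V2" "finite Hs" "card V2 \<le> card Hs" "size \<sigma>' = card Hs - card V2"
  obtains W E \<phi> e where "bij_betw \<phi> W V2" "Hs = W \<union> E" "W \<inter> E = {}"
    "image_mset e (mset_set E) = \<sigma>'"
proof -
  obtain \<psi> where \<psi>: "inj_on \<psi> V2" "\<psi> ` V2 \<subseteq> Hs"
    using card_le_inj[OF assms(1-3)] by blast
  define W where "W = \<psi> ` V2"
  define E where "E = Hs - W"
  have "finite E" using assms(2) by (simp add: E_def)
  moreover have "card E = size \<sigma>'"
    using assms(4) card_Diff_subset[of W Hs] card_image[OF \<psi>(1)] \<psi>(2) assms(1)
    by (simp add: E_def W_def)
  ultimately obtain e where e: "image_mset e (mset_set E) = \<sigma>'"
    using ex_image_mset_eq by metis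
  have "bij_betw (inv_into V2 \<psi>) W V2"
    unfolding W_def by (rule bij_betw_inv_into[OF inj_on_imp_bij_betw[OF \<psi>(1)]])
  moreover have "Hs = W \<union> E" "W \<inter> E = {}"
    using \<psi>(2) by (auto simp: W_def E_def)
  ultimately show thesis using e by (rule that)
qed

lemma padded_block_model:
  fixes M :: "'a rmat" and Hs :: "'b set"
  assumes fin: "finite V1" "finite V2" "finite Hs" and disj: "V1 \<inter> V2 = {}"
    and card: "card V2 \<le> card Hs" and size: "size \<sigma>' = card Hs - card V2"
    and symm: "mat_transp M = M"
  obtains B C where
    "\<And>a h. a \<notin> V1 \<or> h \<notin> Hs \<Longrightarrow> B a h = 0"
    "\<And>a. a \<in> V1 \<Longrightarrow> (\<exists>h\<in>Hs. B a h \<noteq> 0) \<longleftrightarrow> (\<exists>v\<in>V2. M a v \<noteq> 0)"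
    "supported_on Hs C" "mat_transp C = C"
    "spectrum Hs C = spectrum V2 (submatrix M V2) + \<sigma>'"
    "spectrum (V1 <+> Hs) (sym_block_mat (submatrix M V1) B C) = spectrum (V1 \<union> V2) M + \<sigma>'"
proof -
  obtain W E \<phi> e where \<phi>: "bij_betw \<phi> W V2" and WE: "Hs = W \<union> E" "W \<inter> E = {}"
    and e: "image_mset e (mset_set E) = \<sigma>'"
    by (rule obtain_padding[OF fin(2,3) card size])
  have finWE: "finite W" "finite E" using fin(3) WE(1) by auto
  define B where "B = (\<lambda>a h. if a \<in> V1 \<and> h \<in> W then M a (\<phi> h) else 0)"
  define C where "C = (\<lambda>h h'. if h \<in> W \<and> h' \<in> W then M (\<phi> h) (\<phi> h') else mat_diag E e h h')"
  have B_W: "B a h = M a (\<phi> h)" if "a \<in> V1" "h \<in> W" for a h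
    using that by (simp add: B_def)
  have B_E: "B a h = 0" if "h \<in> E" for a h
    using that WE(2) by (auto simp: B_def)
  have C_W: "C h h' = M (\<phi> h) (\<phi> h')" if "h \<in> W" "h' \<in> W" for h h'
    using that by (simp add: C_def)
  have C_WE: "C h h' = 0 \<and> C h' h = 0" if "h \<in> W" "h' \<in> E" for h h'
    using that WE(2) by (auto simp: C_def mat_diag_def)
  have C_E: "C h h' = mat_diag E e h h'" if "h \<in> E" "h' \<in> E" for h h'
    using that WE(2) by (auto simp: C_def)
  have spec: "spectrum Hs C = spectrum V2 (submatrix M V2) + \<sigma>'"
    "spectrum (V1 <+> Hs) (sym_block_mat (submatrix M V1) B C) = spectrum (V1 \<union> V2) M + \<sigma>'"
    using spectrum_padded_block[where B = B and C = C and e = e, OF fin(1) finWE disj WE(2) \<phi> symm]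
      B_W B_E C_W C_WE C_E
    unfolding WE(1) e by blast+
  have Msym: "M x y = M y x" for x y
    by (rule mat_transp_eqD[OF symm])
  show thesis
  proof (rule that[OF _ _ _ _ spec])
    show "B a h = 0" if "a \<notin> V1 \<or> h \<notin> Hs" for a h
      using that WE(1) by (auto simp: B_def)
    show "(\<exists>h\<in>Hs. B a h \<noteq> 0) \<longleftrightarrow> (\<exists>v\<in>V2. M a v \<noteq> 0)" if "a \<in> V1" for a
    proof
      assume "\<exists>h\<in>Hs. B a h \<noteq> 0"
      then show "\<exists>v\<in>V2. M a v \<noteq> 0"
        using \<phi> by (auto simp: B_def bij_betw_def split: if_splits)
    next
      assume "\<exists>v\<in>V2. M a v \<noteq> 0"
      then obtain h where "h \<in> W" "M a (\<phi> h) \<noteq> 0"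
        using \<phi> unfolding bij_betw_def by blast
      then show "\<exists>h\<in>Hs. B a h \<noteq> 0"
        using that WE(1) by (auto simp: B_def)
    qed
    show "supported_on Hs C"
      using WE(1) by (auto simp: supported_on_def C_def mat_diag_def)
    show "mat_transp C = C"
      by (auto simp: mat_transp_def C_def mat_diag_def fun_eq_iff Msym)
  qed
qed

lemma rotated_block_in_S_partial_join:
  assumes A: "A \<in> S(G)" and U: "orthogonal_on (verts H) U" "conj_diag (verts H) U d \<in> S(H)"
    and zero: "\<And>a. a \<notin> X \<inter> verts G \<Longrightarrow> y a = (\<lambda>_. 0)"
    and nz: "\<And>a h. a \<in> X \<inter> verts G \<Longrightarrow> h \<in> verts H \<Longrightarrow> mat_vec (verts H) U (y a) h \<noteq> 0"
  shows "sym_block_mat A (\<lambda>a. mat_vec (verts H) U (y a)) (conj_diag (verts H) U d) \<in> S(partial_join G X H)"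
proof (rule sym_block_mat_in_S_partial_join[OF A U(2)])
  fix a h
  show "mat_vec (verts H) U (y a) h = 0" if "a \<notin> verts G \<or> h \<notin> verts H"
  proof (cases "h \<in> verts H")
    case True
    then show ?thesis using that zero[of a] by (simp add: mat_vec_def)
  next
    case False
    then show ?thesis using U(1) by (simp add: orthogonal_on_iff mat_vec_support)
  qed
  show "mat_vec (verts H) U (y a) h \<noteq> 0 \<longleftrightarrow> a \<in> X" if "a \<in> verts G" "h \<in> verts H"
    using that nz[of a h] zero[of a] by (cases "a \<in> X") (auto simp: mat_vec_def)
qed

lemma ex_cospectral_matrix_in_S_partial_join:
  assumes fin: "finite (verts G)" and A: "A \<in> S(G)"
    and B: "\<And>a h. a \<notin> verts G \<or> h \<notin> verts H \<Longrightarrow> B a h = 0"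
    and B_X: "\<And>a. a \<in> verts G \<Longrightarrow> (\<exists>h\<in>verts H. B a h \<noteq> 0) \<longleftrightarrow> a \<in> X"
    and C: "supported_on (verts H) C" "mat_transp C = C"
    and gr: "generically_realisable (spectrum (verts H) C) H"
  shows "\<exists>N \<in> S(partial_join G X H).
    spectrum (verts (partial_join G X H)) N = spectrum (verts G <+> verts H) (sym_block_mat A B C)"
proof -
  have finH: "finite (verts H)"
    using gr by (simp add: generically_realisable_def connected_graph_def graph_def)
  from gr obtain d where d: "image_mset d (mset_set (verts H)) = spectrum (verts H) C"
    and realise: "\<forall>Y. finite Y \<and> (\<forall>y\<in>Y. (\<forall>i. i \<notin> verts H \<longrightarrow> y i = 0) \<and> (\<exists>i\<in>verts H. y i \<noteq> 0)) \<longrightarrow>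
      (\<exists>U. orthogonal_on (verts H) U \<and> conj_diag (verts H) U d \<in> S(H) \<and>
        (\<forall>y\<in>Y. \<forall>i\<in>verts H. mat_vec (verts H) U y i \<noteq> 0))"
    unfolding generically_realisable_def by (elim conjE exE)
  obtain Q where Q: "orthogonal_on (verts H) Q" "C = conj_diag (verts H) Q d"
    by (rule symmetric_conj_diag_of_spectrum[OF finH C d[symmetric]])
  define y where "y a = mat_vec (verts H) (mat_transp Q) (B a)" for a
  define R where "R = X \<inter> verts G"
  have y_zero: "y a = (\<lambda>_. 0)" if "a \<notin> R" for a
  proof -
    have "B a = (\<lambda>_. 0)"
      using that B B_X by (cases "a \<in> verts G") (fastforce simp: R_def)+
    then show ?thesis by (simp add: y_def mat_vec_def)
  qed
  have "\<exists>h\<in>verts H. y a h \<noteq> 0" if a: "a \<in> R" for a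
  proof -
    obtain h where "h \<in> verts H" "B a h \<noteq> 0" using a B_X by (auto simp: R_def)
    then show ?thesis unfolding y_def by (rule mat_vec_transp_orthogonal_nonzero[OF finH Q(1)])
  qed
  moreover have "y a h = 0" if "h \<notin> verts H" for a h
    using that Q(1) by (simp add: y_def orthogonal_on_iff mat_vec_support)
  moreover have "finite R" using fin by (simp add: R_def)
  ultimately have "finite (y ` R) \<and> (\<forall>z\<in>y ` R. (\<forall>i. i \<notin> verts H \<longrightarrow> z i = 0) \<and> (\<exists>i\<in>verts H. z i \<noteq> 0))"
    by auto
  from realise[rule_format, OF this] obtain U where U: "orthogonal_on (verts H) U"
    "conj_diag (verts H) U d \<in> S(H)"
    and U_nz: "\<forall>z\<in>y ` R. \<forall>h\<in>verts H. mat_vec (verts H) U z h \<noteq> 0"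
    by (elim exE conjE)
  define N where "N = sym_block_mat A (\<lambda>a. mat_vec (verts H) U (y a)) (conj_diag (verts H) U d)"
  have "N \<in> S(partial_join G X H)"
    unfolding N_def using y_zero U_nz
    by (intro rotated_block_in_S_partial_join[OF A U]) (auto simp: R_def)
  moreover have "spectrum (verts G <+> verts H) N = spectrum (verts G <+> verts H) (sym_block_mat A B C)"
    using spectrum_sym_block_mat_change_basis[of "verts G" "verts H" A B,
        OF fin finH S_set_supported_on[OF A] B Q(1) U(1)]
    unfolding N_def y_def Q(2) by simp
  ultimately show ?thesis
    unfolding verts_partial_join by blast
qed

theorem lemma3p6:
  fixes G :: "'a graph" and H :: "'b graph"
    and V1 V2 X :: "'a set" and M :: "'a rmat" and \<sigma>' :: "real multiset"
  assumes "graph G"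
    and "V1 \<union> V2 = verts G" and "V1 \<inter> V2 = {}"
    and "X \<subseteq> V1" and "X = vertex_boundary G V2"
    and "connected_graph H" and "card (verts H) \<ge> card V2"
    and "M \<in> S(G)"
    and "size \<sigma>' = card (verts H) - card V2"
    and "generically_realisable (spectrum V2 (submatrix M V2) + \<sigma>') H"
  shows "\<exists>N \<in> S(partial_join (induced G V1) X H).
           spectrum (verts (partial_join (induced G V1) X H)) N = spectrum (verts G) M + \<sigma>'"
proof -
  have finG: "finite (verts G)" and finH: "finite (verts H)"
    using assms(1,6) by (simp_all add: graph_def connected_graph_def)
  have V: "V1 \<subseteq> verts G" "V2 \<subseteq> verts G" "finite V1" "finite V2"
    using assms(2) finG by (auto intro: finite_subset)
  have V1: "verts (induced G V1) = V1"
    using V(1) by (auto simp: induced_def verts_def)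
  obtain B C where B: "\<And>a h. a \<notin> V1 \<or> h \<notin> verts H \<Longrightarrow> B a h = 0"
    and B_nz: "\<And>a. a \<in> V1 \<Longrightarrow> (\<exists>h\<in>verts H. B a h \<noteq> 0) \<longleftrightarrow> (\<exists>v\<in>V2. M a v \<noteq> 0)"
    and C: "supported_on (verts H) C" "mat_transp C = C"
      "spectrum (verts H) C = spectrum V2 (submatrix M V2) + \<sigma>'"
    and spec: "spectrum (V1 <+> verts H) (sym_block_mat (submatrix M V1) B C) = spectrum (verts G) M + \<sigma>'"
    using padded_block_model[OF V(3,4) finH assms(3,7,9) S_set_mat_transp[OF assms(8)]]
    unfolding assms(2) by blast
  have B_X: "(\<exists>h\<in>verts H. B a h \<noteq> 0) \<longleftrightarrow> a \<in> X" if "a \<in> verts (induced G V1)" for a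
  proof -
    have a: "a \<in> V1" "a \<in> verts G" "a \<notin> V2" using that V1 V(1) assms(3) by auto
    have "a \<in> X \<longleftrightarrow> (\<exists>v\<in>V2. M a v \<noteq> 0)"
      unfolding assms(5) by (rule vertex_boundary_iff_nonzero[OF assms(8) V(2) a(2,3)])
    with B_nz[OF a(1)] show ?thesis by simp
  qed
  have "B a h = 0" if "a \<notin> verts (induced G V1) \<or> h \<notin> verts H" for a h
    using that B V1 by simp
  from ex_cospectral_matrix_in_S_partial_join[where G = "induced G V1" and A = "submatrix M V1" and B = B
      and X = X, OF _ submatrix_in_S_induced[OF assms(8)] this B_X C(1,2) assms(10)[folded C(3)]]
  show ?thesis
    using V(3) spec unfolding V1 by simp
qed

end
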